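(* Let $T$ be a tree with exactly three pendant vertices $u_1,u_2,u_3$ and major vertex $m$, with $d(u_1,m)\equiv d(u_2,m)\equiv 1\pmod 3$. Then there exists an eigenvector $x$ of $L(T)$ with eigenvalue $1$ such that for every $k\in\{1,2,3\}$ and every vertex $v$ on the path $P_{u_k,m}$ with $d(v,u_k)\equiv 1\pmod 3$, one has $x(v)=0$.
   Context: $L(T)=D(T)-A(T)$ is the Laplacian matrix of $T$. A pendant vertex has degree $1$; a major vertex has degree at least $3$. $P_{r,s}$ is the path in $T$ from $r$ to $s$, and $d$ denotes distance. *)

theory Defs
  imports "HOL-Analysis.Analysis"
begin

definition simple_graph :: "'a set \<Rightarrow> ('a \<Rightarrow> 'a \<Rightarrow> bool) \<Rightarrow> bool" where
  "simple_graph V E \<longleftrightarrow> finite V \<and>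
     (\<forall>u v. E u v \<longrightarrow> u \<in> V \<and> v \<in> V) \<and>
     (\<forall>u v. E u v \<longrightarrow> E v u) \<and> (\<forall>v. \<not> E v v)"

definition walk :: "'a set \<Rightarrow> ('a \<Rightarrow> 'a \<Rightarrow> bool) \<Rightarrow> 'a list \<Rightarrow> bool" where
  "walk V E p \<longleftrightarrow> p \<noteq> [] \<and> set p \<subseteq> V \<and>
     (\<forall>i. Suc i < length p \<longrightarrow> E (p ! i) (p ! Suc i))"

definition gpath :: "'a set \<Rightarrow> ('a \<Rightarrow> 'a \<Rightarrow> bool) \<Rightarrow> 'a list \<Rightarrow> bool" where
  "gpath V E p \<longleftrightarrow> walk V E p \<and> distinct p"

definition gconnected :: "'a set \<Rightarrow> ('a \<Rightarrow> 'a \<Rightarrow> bool) \<Rightarrow> bool" where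
  "gconnected V E \<longleftrightarrow> (\<forall>u\<in>V. \<forall>v\<in>V. \<exists>p. walk V E p \<and> hd p = u \<and> last p = v)"

definition gcycle :: "'a set \<Rightarrow> ('a \<Rightarrow> 'a \<Rightarrow> bool) \<Rightarrow> 'a list \<Rightarrow> bool" where
  "gcycle V E p \<longleftrightarrow> gpath V E p \<and> length p \<ge> 3 \<and> E (last p) (hd p)"

definition tree :: "'a set \<Rightarrow> ('a \<Rightarrow> 'a \<Rightarrow> bool) \<Rightarrow> bool" where
  "tree V E \<longleftrightarrow> simple_graph V E \<and> V \<noteq> {} \<and> gconnected V E \<and> (\<nexists>p. gcycle V E p)"

definition degree :: "'a set \<Rightarrow> ('a \<Rightarrow> 'a \<Rightarrow> bool) \<Rightarrow> 'a \<Rightarrow> nat" where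
  "degree V E v = card {w \<in> V. E v w}"

definition pendant :: "'a set \<Rightarrow> ('a \<Rightarrow> 'a \<Rightarrow> bool) \<Rightarrow> 'a \<Rightarrow> bool" where
  "pendant V E v \<longleftrightarrow> v \<in> V \<and> degree V E v = 1"

definition major :: "'a set \<Rightarrow> ('a \<Rightarrow> 'a \<Rightarrow> bool) \<Rightarrow> 'a \<Rightarrow> bool" where
  "major V E v \<longleftrightarrow> v \<in> V \<and> degree V E v \<ge> 3"

definition gdist :: "'a set \<Rightarrow> ('a \<Rightarrow> 'a \<Rightarrow> bool) \<Rightarrow> 'a \<Rightarrow> 'a \<Rightarrow> nat" where
  "gdist V E u v = (LEAST n. \<exists>p. walk V E p \<and> hd p = u \<and> last p = v \<and> length p = Suc n)"

text \<open>Vertex set of the path P_{r,s} from r to s (unique in a tree).\<close>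
definition path_verts :: "'a set \<Rightarrow> ('a \<Rightarrow> 'a \<Rightarrow> bool) \<Rightarrow> 'a \<Rightarrow> 'a \<Rightarrow> 'a set" where
  "path_verts V E r s = \<Union> {set p | p. gpath V E p \<and> hd p = r \<and> last p = s}"

definition laplacian :: "'a set \<Rightarrow> ('a \<Rightarrow> 'a \<Rightarrow> bool) \<Rightarrow> ('a \<Rightarrow> real) \<Rightarrow> 'a \<Rightarrow> real" where
  "laplacian V E x v = real (degree V E v) * x v - (\<Sum>w\<in>{w \<in> V. E v w}. x w)"

definition lap_eigenvector :: "'a set \<Rightarrow> ('a \<Rightarrow> 'a \<Rightarrow> bool) \<Rightarrow> real \<Rightarrow> ('a \<Rightarrow> real) \<Rightarrow> bool" where
  "lap_eigenvector V E mu x \<longleftrightarrow> (\<exists>v\<in>V. x v \<noteq> 0) \<and> (\<forall>v\<in>V. laplacian V E x v = mu * x v)"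

end

theory Submission
  imports Defs
begin

text \<open>Since the tree has only three leaves, the degree sum formula leaves no room for a
  second vertex of degree at least 3: the tree is a spider with centre m, made of three legs
  (paths from the leaves to m) that meet only at m. Along a leg, the eigenvalue-1 equation at a
  vertex of degree 2 reads x(j-1) + x(j+1) = x(j), and at the leaf it forces x(1) = 0; the solution
  1, 0, -1, -1, 0, 1, ... is 6-periodic and vanishes exactly at distances 1 mod 3 from the leaf,
  in particular at m on the legs of u 1 and u 2. Put such waves on these two legs and 0 elsewhere.
  The equation then holds at every vertex except m, where it asks that the values at the last inner
  vertices of the two legs cancel; choosing the amplitudes crosswise achieves this.\<close>

section \<open>Walks and distances\<close>

lemma walk_Nil [simp]: "\<not> walk V E []"
  by (simp add: walk_def)

lemma walk_single [simp]: "walk V E [a] \<longleftrightarrow> a \<in> V"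
  by (simp add: walk_def)

lemma walk_Cons2 [simp]: "walk V E (a # b # p) \<longleftrightarrow> a \<in> V \<and> E a b \<and> walk V E (b # p)"
proof
  assume "walk V E (a # b # p)"
  then show "a \<in> V \<and> E a b \<and> walk V E (b # p)"
    unfolding walk_def by (auto dest: spec[where x="Suc _"] spec[where x=0])
next
  assume H: "a \<in> V \<and> E a b \<and> walk V E (b # p)"
  show "walk V E (a # b # p)" unfolding walk_def
  proof (intro conjI allI impI)
    fix i assume "Suc i < length (a # b # p)"
    then show "E ((a # b # p) ! i) ((a # b # p) ! Suc i)"
      using H unfolding walk_def by (cases i) auto
  qed (use H in \<open>auto simp: walk_def\<close>)
qed

lemma walk_append:
  "xs \<noteq> [] \<Longrightarrow> ys \<noteq> [] \<Longrightarrow>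
    walk V E (xs @ ys) \<longleftrightarrow> walk V E xs \<and> walk V E ys \<and> E (last xs) (hd ys)"
proof (induction xs)
  case (Cons a xs)
  then show ?case by (cases xs; cases ys) auto
qed simp

lemma walk_rev:
  assumes "\<And>u v. E u v \<Longrightarrow> E v u" and "walk V E p"
  shows "walk V E (rev p)"
  using assms(2)
proof (induction p rule: induct_list012)
  case (3 x y zs)
  then have "walk V E (rev zs @ [y])" and "E y x" using assms(1) by auto
  then have "walk V E ((rev zs @ [y]) @ [x])"
    using 3 walk_append[of "rev zs @ [y]" "[x]"] by simp
  then show ?case by simp
qed auto

lemma walk_take: "walk V E p \<Longrightarrow> 0 < n \<Longrightarrow> walk V E (take n p)"
  using walk_append[of "take n p" "drop n p" V E]
  by (cases "drop n p = []") (auto simp: walk_def)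

lemma walk_drop:
  assumes "walk V E p" "n < length p"
  shows "walk V E (drop n p)"
proof (cases "n = 0")
  case False
  with assms have "take n p \<noteq> []" "drop n p \<noteq> []" by auto
  then show ?thesis using walk_append[of "take n p" "drop n p" V E] assms(1) by simp
qed (use assms in simp)

lemma walk_join:
  assumes "walk V E p" "walk V E q" "last p = hd q"
  shows "walk V E (p @ tl q)"
proof (cases "tl q = []")
  case False
  then have "walk V E (tl q)" and "E (last p) (hd (tl q))"
    using assms walk_drop[OF assms(2), of 1] by (cases q; cases "tl q"; auto)+
  then show ?thesis
    using walk_append[of p "tl q" V E] assms(1) False by (auto simp: walk_def)
qed (use assms in simp)

lemma last_append_tl: "p \<noteq> [] \<Longrightarrow> q \<noteq> [] \<Longrightarrow> last p = hd q \<Longrightarrow> last (p @ tl q) = last q"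
  by (cases q; cases "tl q") auto

lemma walk_edge: "walk V E p \<Longrightarrow> Suc i < length p \<Longrightarrow> E (p ! i) (p ! Suc i)"
  unfolding walk_def by blast

lemma walk_nth_in: "walk V E p \<Longrightarrow> i < length p \<Longrightarrow> p ! i \<in> V"
  unfolding walk_def by (auto simp: subset_iff)

lemma walk_length_ge_2: "walk V E p \<Longrightarrow> hd p \<noteq> last p \<Longrightarrow> 2 \<le> length p"
  by (cases p; cases "tl p") (auto simp: walk_def)

lemma hd_conv_nth0: "2 \<le> length p \<Longrightarrow> hd p = p ! 0"
  by (cases p) auto

lemma gdist_less_length:
  assumes "walk V E p"
  shows "gdist V E (hd p) (last p) < length p"
proof -
  have "length p = Suc (length p - 1)" using assms by (cases p) auto
  then have "gdist V E (hd p) (last p) \<le> length p - 1"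
    unfolding gdist_def using assms by (intro Least_le) blast
  then show ?thesis using assms by (cases p) auto
qed

lemma shortest_walk_exists:
  assumes "walk V E p"
  shows "\<exists>q. walk V E q \<and> hd q = hd p \<and> last q = last p \<and> length q = Suc (gdist V E (hd p) (last p))"
proof -
  have "length p = Suc (length p - 1)" using assms by (cases p) auto
  then have "\<exists>n q. walk V E q \<and> hd q = hd p \<and> last q = last p \<and> length q = Suc n"
    using assms by blast
  then show ?thesis unfolding gdist_def by (rule LeastI_ex)
qed

lemma walk_shortcut:
  assumes "walk V E w" "\<not> distinct w"
  shows "\<exists>w'. walk V E w' \<and> hd w' = hd w \<and> last w' = last w \<and> length w' < length w"
proof -
  obtain i j where ij: "i < j" "j < length w" "w ! i = w ! j"
    using assms(2) by (metis distinct_conv_nth linorder_neqE_nat)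
  let ?p = "take (Suc i) w" and ?q = "drop j w"
  have p: "walk V E ?p" "last ?p = w ! i"
    using walk_take[OF assms(1), of "Suc i"] ij by (simp_all add: take_Suc_conv_app_nth)
  have q: "walk V E ?q" "hd ?q = w ! j"
    using walk_drop[OF assms(1)] ij by (auto simp: hd_drop_conv_nth)
  have "walk V E (?p @ tl ?q)" using walk_join[OF p(1) q(1)] p q ij by simp
  moreover have "hd (?p @ tl ?q) = hd w" using ij by (cases w) auto
  moreover have "last (?p @ tl ?q) = last w"
    using last_append_tl[of ?p ?q] p q ij by (cases "w = []") auto
  moreover have "length (?p @ tl ?q) < length w" using ij by simp
  ultimately show ?thesis by blast
qed

lemma shortest_walk_distinct:
  assumes "walk V E q" "length q = Suc (gdist V E (hd q) (last q))"
  shows "distinct q"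
  using walk_shortcut[OF assms(1)] gdist_less_length[of V E] assms(2) by fastforce

lemma connected_shortest_path:
  assumes "gconnected V E" "a \<in> V" "b \<in> V"
  shows "\<exists>p. walk V E p \<and> distinct p \<and> hd p = a \<and> last p = b \<and> length p = Suc (gdist V E a b)"
proof -
  obtain p where "walk V E p" "hd p = a" "last p = b"
    using assms unfolding gconnected_def by blast
  then show ?thesis using shortest_walk_exists shortest_walk_distinct by metis
qed

lemma gdist_shortest_walk_nth:
  assumes sym: "\<And>u v. E u v \<Longrightarrow> E v u" and p: "walk V E p"
    and shortest: "length p = Suc (gdist V E (hd p) (last p))" and j: "j < length p"
  shows "gdist V E (p ! j) (hd p) = j"
proof (rule antisym)
  let ?prefix = "rev (take (Suc j) p)"
  have prefix: "walk V E ?prefix" "hd ?prefix = p ! j" "last ?prefix = hd p"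
    using walk_rev[OF sym walk_take[OF p, of "Suc j"]] j
    by (simp_all add: hd_rev last_rev take_Suc_conv_app_nth, cases p, auto)
  then show "gdist V E (p ! j) (hd p) \<le> j"
    using gdist_less_length[OF prefix(1)] j by simp
  obtain w where w: "walk V E w" "hd w = p ! j" "last w = hd p"
    "length w = Suc (gdist V E (p ! j) (hd p))"
    using shortest_walk_exists[OF prefix(1)] prefix by metis
  let ?detour = "rev w @ tl (drop j p)"
  have drop: "walk V E (drop j p)" "hd (drop j p) = p ! j"
    using walk_drop[OF p j] j by (auto simp: hd_drop_conv_nth)
  have "walk V E ?detour"
    using walk_join[OF walk_rev[OF sym w(1)] drop(1)] w drop by (simp add: last_rev)
  moreover have "hd ?detour = hd p" using w(1,3) by (auto simp: walk_def hd_append hd_rev)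
  moreover have "last ?detour = last p"
    using last_append_tl[of "rev w" "drop j p"] w drop j by (cases "w = []") (auto simp: last_rev)
  ultimately have "gdist V E (hd p) (last p) < length ?detour"
    using gdist_less_length[of V E ?detour] by simp
  then show "j \<le> gdist V E (p ! j) (hd p)" using shortest w j by simp
qed

section \<open>Simple graphs and trees\<close>

definition neighbours :: "'a set \<Rightarrow> ('a \<Rightarrow> 'a \<Rightarrow> bool) \<Rightarrow> 'a \<Rightarrow> 'a set" where
  "neighbours V E v = {w \<in> V. E v w}"

lemma degree_eq_card_neighbours: "degree V E v = card (neighbours V E v)"
  by (simp add: degree_def neighbours_def)

lemma simple_graph_finite: "simple_graph V E \<Longrightarrow> finite V"
  by (simp add: simple_graph_def)

lemma simple_graph_edge_in: "simple_graph V E \<Longrightarrow> E u v \<Longrightarrow> u \<in> V \<and> v \<in> V"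
  by (simp add: simple_graph_def)

lemma simple_graph_sym: "simple_graph V E \<Longrightarrow> E u v \<Longrightarrow> E v u"
  by (simp add: simple_graph_def)

lemma simple_graph_irrefl: "simple_graph V E \<Longrightarrow> \<not> E v v"
  by (simp add: simple_graph_def)

lemma mem_neighbours_iff: "simple_graph V E \<Longrightarrow> w \<in> neighbours V E v \<longleftrightarrow> E v w"
  by (auto simp: neighbours_def dest: simple_graph_edge_in)

lemma finite_neighbours: "simple_graph V E \<Longrightarrow> finite (neighbours V E v)"
  by (simp add: neighbours_def simple_graph_finite)

lemma neighbours_sym:
  assumes "simple_graph V E"
  shows "w \<in> neighbours V E v \<longleftrightarrow> v \<in> neighbours V E w"
  unfolding mem_neighbours_iff[OF assms] using simple_graph_sym[OF assms] by blast

lemma gpath_interior_neighbours: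
  assumes G: "simple_graph V E" and "gpath V E P" "0 < j" "Suc j < length P"
  shows "{P ! (j - 1), P ! Suc j} \<subseteq> neighbours V E (P ! j)"
    and "card {P ! (j - 1), P ! Suc j} = 2"
proof -
  have walk: "walk V E P" and dist: "distinct P" using assms(2) by (auto simp: gpath_def)
  have "E (P ! (j - 1)) (P ! j)" "E (P ! j) (P ! Suc j)"
    using walk_edge[OF walk, of "j - 1"] walk_edge[OF walk, of j] assms(3,4) by auto
  then show "{P ! (j - 1), P ! Suc j} \<subseteq> neighbours V E (P ! j)"
    using simple_graph_sym[OF G] by (simp add: mem_neighbours_iff[OF G])
  have "P ! (j - 1) \<noteq> P ! Suc j" using dist assms(4) by (simp add: nth_eq_iff_index_eq)
  then show "card {P ! (j - 1), P ! Suc j} = 2" by simp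
qed

lemma gpath_interior_degree:
  assumes "simple_graph V E" "gpath V E P" "0 < j" "Suc j < length P"
  shows "2 \<le> degree V E (P ! j)"
  using card_mono[OF finite_neighbours[OF assms(1)] gpath_interior_neighbours(1)[OF assms]]
    gpath_interior_neighbours(2)[OF assms] by (simp add: degree_eq_card_neighbours)

lemma gpath_length_le_card: "simple_graph V E \<Longrightarrow> gpath V E p \<Longrightarrow> length p \<le> card V"
  unfolding gpath_def walk_def by (metis card_mono distinct_card simple_graph_finite)

lemma gpath_snoc:
  assumes "gpath V E p" "E (last p) w" "w \<in> V" "w \<notin> set p"
  shows "gpath V E (p @ [w])"
  using assms walk_append[of p "[w]" V E] by (cases p) (auto simp: gpath_def)

lemma longest_gpath_exists:
  assumes "simple_graph V E" "gpath V E p"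
  shows "\<exists>r. gpath V E r \<and> (\<forall>q. gpath V E q \<longrightarrow> length q \<le> length r)"
  using Lattices_Big.ex_has_greatest_nat[of "gpath V E" p length "Suc (card V)"]
    gpath_length_le_card[OF assms(1)] assms(2) by (simp add: less_Suc_eq_le)

lemma connected_neighbour_exists:
  assumes G: "simple_graph V E" and "gconnected V E" "v \<in> V" "2 \<le> card V"
  shows "\<exists>w. E v w"
proof -
  have "\<not> V \<subseteq> {v}" using assms(4) card_mono[of "{v}" V] by auto
  then obtain w where "w \<in> V" "w \<noteq> v" by blast
  then obtain q where q: "walk V E q" "hd q = v" "last q = w"
    using assms(2,3) unfolding gconnected_def by blast
  then have "2 \<le> length q" using walk_length_ge_2 \<open>w \<noteq> v\<close> by metis
  then show ?thesis using walk_edge[OF q(1), of 0] q(2) hd_conv_nth0 by fastforce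
qed

lemma tree_simple_graph: "tree V E \<Longrightarrow> simple_graph V E"
  by (simp add: tree_def)

lemma tree_connected: "tree V E \<Longrightarrow> gconnected V E"
  by (simp add: tree_def)

lemma tree_no_chord:
  assumes T: "tree V E" and r: "gpath V E r" and i: "i + 2 < length r"
  shows "\<not> E (last r) (r ! i)"
proof
  assume chord: "E (last r) (r ! i)"
  have "gpath V E (drop i r)"
    using r i walk_drop[of V E r i] by (simp add: gpath_def)
  then have "gcycle V E (drop i r)"
    using chord i by (simp add: gcycle_def hd_drop_conv_nth)
  then show False using T by (simp add: tree_def)
qed

lemma tree_has_leaf:
  assumes T: "tree V E" and card: "2 \<le> card V"
  shows "\<exists>l w. l \<in> V \<and> neighbours V E l = {w}"
proof -
  have G: "simple_graph V E" using T by (rule tree_simple_graph)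
  obtain a where a: "a \<in> V" using T by (auto simp: tree_def)
  obtain b where ab: "E a b"
    using connected_neighbour_exists[OF G tree_connected[OF T] a card] by blast
  then have "gpath V E [a, b]"
    using simple_graph_edge_in[OF G ab] simple_graph_irrefl[OF G, of a] by (auto simp: gpath_def)
  then obtain r where r: "gpath V E r" and longest: "\<And>q. gpath V E q \<Longrightarrow> length q \<le> length r"
    using longest_gpath_exists[OF G] by blast
  define n where "n = length r"
  have n: "2 \<le> n" using longest[OF \<open>gpath V E [a, b]\<close>] by (simp add: n_def)
  have walk: "walk V E r" and dist: "distinct r" using r by (auto simp: gpath_def)
  have "r \<noteq> []" using n by (auto simp: n_def)
  then have z: "last r = r ! (n - 1)" by (simp add: n_def last_conv_nth)
  have "Suc (n - 2) = n - 1" using n by simp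
  then have "E (r ! (n - 2)) (last r)" using walk_edge[OF walk, of "n - 2"] n z by (simp add: n_def)
  then have zy: "E (last r) (r ! (n - 2))" by (rule simple_graph_sym[OF G])
  have only: "w = r ! (n - 2)" if zw: "E (last r) w" for w
  proof -
    have "w \<in> set r"
    proof (rule ccontr)
      assume "w \<notin> set r"
      then have "gpath V E (r @ [w])" using gpath_snoc[OF r zw] simple_graph_edge_in[OF G zw] by blast
      then show False using longest[of "r @ [w]"] by simp
    qed
    then obtain i where i: "i < n" "r ! i = w" by (auto simp: n_def in_set_conv_nth)
    have "i \<noteq> n - 1" using zw z i simple_graph_irrefl[OF G] by auto
    moreover have "\<not> i + 2 < n" using tree_no_chord[OF T r] zw i by (auto simp: n_def)
    ultimately have "i = n - 2" using i by linarith
    then show ?thesis using i by simp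
  qed
  have "neighbours V E (last r) = {r ! (n - 2)}"
    unfolding set_eq_iff mem_neighbours_iff[OF G] using only zy by blast
  moreover have "last r \<in> V" using walk_nth_in[OF walk, of "n - 1"] z n by (simp add: n_def)
  ultimately show ?thesis by blast
qed

lemma tree_remove_leaf:
  assumes T: "tree V E" and l: "l \<in> V" "neighbours V E l = {p}" and card: "2 \<le> card V"
  shows "tree (V - {l}) (\<lambda>a b. E a b \<and> a \<noteq> l \<and> b \<noteq> l)"
proof -
  let ?V = "V - {l}" and ?E = "\<lambda>a b. E a b \<and> a \<noteq> l \<and> b \<noteq> l"
  have G: "simple_graph V E" using T by (rule tree_simple_graph)
  then have "simple_graph ?V ?E" by (auto simp: simple_graph_def)
  moreover have "?V \<noteq> {}" using card l(1) card_mono[of "{l}" V] by auto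
  moreover have "\<nexists>q. gcycle ?V ?E q"
    using T unfolding tree_def gcycle_def gpath_def walk_def by blast
  moreover have "gconnected ?V ?E" unfolding gconnected_def
  proof (intro ballI)
    fix a b assume ab: "a \<in> ?V" "b \<in> ?V"
    obtain q where q: "walk V E q" "distinct q" "hd q = a" "last q = b"
      using connected_shortest_path[OF tree_connected[OF T], of a b] ab by auto
    have "l \<notin> set q"
    proof
      assume "l \<in> set q"
      then obtain i where i: "i < length q" "q ! i = l" by (metis in_set_conv_nth)
      have "q \<noteq> []" using i by auto
      have "i \<noteq> 0"
      proof
        assume "i = 0"
        then show False using q(3) ab i \<open>q \<noteq> []\<close> by (simp add: hd_conv_nth)
      qed
      moreover have "i \<noteq> length q - 1"
        using q(4) ab i \<open>q \<noteq> []\<close> by (auto simp: last_conv_nth)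
      ultimately have around: "Suc (i - 1) = i" "Suc i < length q" using i by auto
      have "E l (q ! (i - 1))" "E l (q ! Suc i)"
        using walk_edge[OF q(1), of "i - 1"] walk_edge[OF q(1), of i] around i
          simple_graph_sym[OF G] by auto
      then have "q ! (i - 1) \<in> neighbours V E l" "q ! Suc i \<in> neighbours V E l"
        using G by (simp_all add: mem_neighbours_iff)
      then have "q ! (i - 1) = q ! Suc i" using l(2) by simp
      then show False using q(2) around by (simp add: nth_eq_iff_index_eq)
    qed
    then have "walk ?V ?E q" using q(1) unfolding walk_def by auto
    then show "\<exists>p. walk ?V ?E p \<and> hd p = a \<and> last p = b" using q by blast
  qed
  ultimately show ?thesis unfolding tree_def by blast
qed

lemma tree_degree_sum: "tree V E \<Longrightarrow> (\<Sum>v\<in>V. degree V E v) = 2 * card V - 2"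
proof (induction "card V" arbitrary: V E)
  case 0
  then show ?case by (simp add: tree_def simple_graph_def)
next
  case (Suc n)
  have G: "simple_graph V E" using Suc.prems by (rule tree_simple_graph)
  show ?case
  proof (cases "n = 0")
    case True
    then obtain a where "V = {a}" using Suc.hyps(2) card_1_singletonE by auto
    then show ?thesis using G by (simp add: degree_def simple_graph_irrefl)
  next
    case False
    then obtain l p where l: "l \<in> V" "neighbours V E l = {p}"
      using tree_has_leaf[OF Suc.prems] Suc.hyps(2) by auto
    let ?V = "V - {l}" and ?E = "\<lambda>a b. E a b \<and> a \<noteq> l \<and> b \<noteq> l"
    have IH: "(\<Sum>v\<in>?V. degree ?V ?E v) = 2 * n - 2"
      using Suc.hyps(1)[of ?V ?E] tree_remove_leaf[OF Suc.prems l] Suc.hyps(2) False l(1)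
      by simp
    have p: "p \<in> ?V" "E l p" "E p l"
      using l simple_graph_irrefl[OF G, of l] simple_graph_sym[OF G, of l p]
      by (auto simp: neighbours_def)
    have "neighbours V E v = neighbours ?V ?E v \<union> (if v = p then {l} else {})" if "v \<in> ?V" for v
      using that l p neighbours_sym[OF G, of _ l] by (auto simp: neighbours_def)
    then have deg: "degree V E v = degree ?V ?E v + (if v = p then 1 else 0)" if "v \<in> ?V" for v
      using that finite_neighbours[OF G, of v]
      by (auto simp: degree_eq_card_neighbours neighbours_def card_insert_if)
    have "(\<Sum>v\<in>V. degree V E v) = degree V E l + (\<Sum>v\<in>?V. degree V E v)"
      using l simple_graph_finite[OF G] by (simp add: sum.remove)
    also have "\<dots> = 1 + (\<Sum>v\<in>?V. degree ?V ?E v + (if v = p then 1 else 0))"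
      using l(2) deg by (simp add: degree_eq_card_neighbours)
    also have "\<dots> = 1 + ((\<Sum>v\<in>?V. degree ?V ?E v) + 1)"
      using p(1) simple_graph_finite[OF G] by (simp add: sum.distrib)
    finally show ?thesis using IH Suc.hyps(2) False by simp
  qed
qed

lemma tree_degree_pos:
  assumes "tree V E" "2 \<le> card V" "v \<in> V"
  shows "1 \<le> degree V E v"
proof -
  have G: "simple_graph V E" using assms(1) by (rule tree_simple_graph)
  obtain w where "E v w" using connected_neighbour_exists[OF G tree_connected] assms by blast
  then have "neighbours V E v \<noteq> {}" using G by (auto simp: mem_neighbours_iff)
  then show ?thesis
    using finite_neighbours[OF G] by (simp add: degree_eq_card_neighbours Suc_le_eq card_gt_0_iff)
qed


lemma tree_three_pendants_degree_le_2:
  assumes T: "tree V E" and pendants: "card {v. pendant V E v} = 3" and m: "major V E m"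
    and v: "v \<in> V" "v \<noteq> m"
  shows "degree V E v \<le> 2"
proof (rule ccontr)
  assume v_major: "\<not> degree V E v \<le> 2"
  have fin: "finite V" using T by (simp add: tree_def simple_graph_def)
  let ?P = "{v. pendant V E v}"
  let ?A = "?P \<union> {m, v}"
  have PV: "?P \<subseteq> V" by (auto simp: pendant_def)
  have mv: "m \<in> V" "m \<notin> ?P" "v \<notin> ?P" using m v v_major by (auto simp: major_def pendant_def)
  have AV: "?A \<subseteq> V" using PV mv v by auto
  have finP: "finite ?P" using PV fin finite_subset by blast
  have cardA: "card ?A = 5" using pendants mv v finP by (simp add: card_insert_if)
  then have card: "2 \<le> card V" using card_mono[OF fin AV] by simp
  have "(\<Sum>s\<in>?A. degree V E s) = 3 + degree V E m + degree V E v"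
    using pendants mv v finP by (simp add: pendant_def)
  moreover have "2 * card (V - ?A) \<le> (\<Sum>s\<in>V - ?A. degree V E s)"
  proof -
    have "2 \<le> degree V E s" if "s \<in> V - ?A" for s
      using tree_degree_pos[OF T card, of s] that by (force simp: pendant_def)
    then have "(\<Sum>s\<in>V - ?A. 2) \<le> (\<Sum>s\<in>V - ?A. degree V E s)" by (rule sum_mono)
    then show ?thesis by simp
  qed
  moreover have "(\<Sum>s\<in>V. degree V E s) = (\<Sum>s\<in>V - ?A. degree V E s) + (\<Sum>s\<in>?A. degree V E s)"
    using sum.subset_diff[OF AV fin] by simp
  moreover have "card (V - ?A) = card V - 5"
    using card_Diff_subset[OF finite_subset[OF AV fin] AV] cardA by simp
  moreover have "5 \<le> card V" using cardA card_mono[OF fin AV] by simp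
  moreover have "3 \<le> degree V E m" using m by (simp add: major_def)
  ultimately show False using tree_degree_sum[OF T] v_major by linarith
qed

section \<open>Spiders\<close>

locale spider =
  fixes V :: "'a set" and E :: "'a \<Rightarrow> 'a \<Rightarrow> bool" and m :: 'a
  assumes simple: "simple_graph V E"
    and degree_le_2: "\<And>v. v \<in> V \<Longrightarrow> v \<noteq> m \<Longrightarrow> degree V E v \<le> 2"
    and centre_not_pendant: "\<not> pendant V E m"
begin

definition leg :: "'a list \<Rightarrow> bool" where
  "leg P \<longleftrightarrow> gpath V E P \<and> pendant V E (hd P) \<and> last P = m"

lemma gpath_interior_neighbours_eq:
  assumes "gpath V E P" "0 < j" "Suc j < length P" "P ! j \<noteq> m"
  shows "neighbours V E (P ! j) = {P ! (j - 1), P ! Suc j}"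
proof -
  have "P ! j \<in> V" using assms(1,3) walk_nth_in by (fastforce simp: gpath_def)
  then have "card (neighbours V E (P ! j)) \<le> 2"
    using degree_le_2 assms(4) by (simp add: degree_eq_card_neighbours)
  then show ?thesis
    using card_seteq[OF finite_neighbours[OF simple]
        gpath_interior_neighbours(1)[OF simple assms(1-3)]]
      gpath_interior_neighbours(2)[OF simple assms(1-3)] by simp
qed

lemma leg_length: "leg P \<Longrightarrow> 2 \<le> length P"
  using centre_not_pendant walk_length_ge_2 by (fastforce simp: leg_def gpath_def)

lemma leg_last_nth:
  assumes "leg P"
  shows "P ! (length P - 1) = m"
proof -
  have "P \<noteq> []" using leg_length[OF assms] by auto
  then show ?thesis using assms by (simp add: leg_def last_conv_nth)
qed

lemma leg_nth_not_centre:
  assumes "leg P" "i < length P - 1"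
  shows "P ! i \<noteq> m"
proof -
  have "distinct P" using assms(1) by (simp add: leg_def gpath_def)
  then show ?thesis
    using leg_last_nth[OF assms(1)] assms(2) nth_eq_iff_index_eq[of P i "length P - 1"] by auto
qed

lemma leg_neighbours_hd:
  assumes P: "leg P"
  shows "neighbours V E (P ! 0) = {P ! 1}"
proof -
  have "pendant V E (P ! 0)" using P leg_length[OF P] by (simp add: leg_def hd_conv_nth0)
  then have "card (neighbours V E (P ! 0)) = 1" by (simp add: pendant_def degree_eq_card_neighbours)
  moreover have "P ! 1 \<in> neighbours V E (P ! 0)"
    using walk_edge[of V E P 0] P leg_length[OF P] simple
    by (simp add: leg_def gpath_def mem_neighbours_iff)
  ultimately show ?thesis by (auto simp: card_1_singleton_iff)
qed

text \<open>For i = 0 the bound reads {P ! 0, P ! 1}, by truncated subtraction.\<close>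

lemma leg_neighbours_nth:
  assumes P: "leg P" and i: "i < length P - 1"
  shows "neighbours V E (P ! i) \<subseteq> {P ! (i - 1), P ! Suc i}"
proof (cases "i = 0")
  case True
  then show ?thesis using leg_neighbours_hd[OF P] by auto
next
  case False
  then show ?thesis
    using gpath_interior_neighbours_eq[of P i] P i leg_nth_not_centre[OF P i]
    by (simp add: leg_def)
qed

lemma leg_neighbours_subset: "leg P \<Longrightarrow> i < length P - 1 \<Longrightarrow> neighbours V E (P ! i) \<subseteq> set P"
  using leg_neighbours_nth[of P i] by auto

lemma leg_pendant_nth:
  assumes P: "leg P" and i: "i < length P" and pendant: "pendant V E (P ! i)"
  shows "i = 0"
proof (rule ccontr)
  assume "i \<noteq> 0"
  moreover have "i \<noteq> length P - 1" using leg_last_nth[OF P] pendant centre_not_pendant by auto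
  ultimately have "2 \<le> degree V E (P ! i)"
    using gpath_interior_degree[OF simple, of P i] P i by (simp add: leg_def)
  then show False using pendant by (simp add: pendant_def)
qed

lemma leg_centre_neighbour:
  assumes P: "leg P" and w: "w \<in> set P" "E w m"
  shows "w = P ! (length P - 2)"
proof -
  obtain i where i: "i < length P" "P ! i = w" using w(1) by (metis in_set_conv_nth)
  have dist: "distinct P" using P by (simp add: leg_def gpath_def)
  have "i \<noteq> length P - 1" using i w(2) leg_last_nth[OF P] simple_graph_irrefl[OF simple] by auto
  then have i': "i < length P - 1" using i by simp
  have "m \<in> neighbours V E (P ! i)"
    using w(2) i simple by (simp add: mem_neighbours_iff)
  then have "P ! (length P - 1) \<in> {P ! (i - 1), P ! Suc i}"
    using leg_neighbours_nth[OF P i'] leg_last_nth[OF P] by auto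
  then have "length P - 1 = Suc i"
    using dist i' by (auto simp: nth_eq_iff_index_eq)
  then have "i = length P - 2" by simp
  then show ?thesis using i by simp
qed

lemma leg_unique:
  assumes P: "leg P" and Q: "leg Q" and hd: "hd P = hd Q"
  shows "P = Q"
proof -
  have distQ: "distinct Q" and walkQ: "walk V E Q" using Q by (auto simp: leg_def gpath_def)
  have nth_eq: "P ! i = Q ! i" if "i < length P" "i < length Q" for i
    using that
  proof (induction i rule: less_induct)
    case (less i)
    show ?case
    proof (cases i)
      case 0
      then show ?thesis using hd leg_length[OF P] leg_length[OF Q] by (simp add: hd_conv_nth0)
    next
      case (Suc k)
      have "P ! (k - 1) = Q ! (k - 1)" "P ! k = Q ! k" using less Suc by auto
      moreover have "Q ! Suc k \<in> neighbours V E (Q ! k)"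
        using walk_edge[OF walkQ, of k] less.prems Suc simple by (simp add: mem_neighbours_iff)
      moreover have "Q ! Suc k \<noteq> Q ! (k - 1)"
        using distQ less.prems Suc by (simp add: nth_eq_iff_index_eq)
      moreover have "k < length P - 1" using less.prems Suc by simp
      ultimately show ?thesis
        using leg_neighbours_nth[OF P, of k] Suc by auto
    qed
  qed
  have "length P = length Q"
  proof (rule ccontr)
    assume "length P \<noteq> length Q"
    then consider "length P < length Q" | "length Q < length P" by linarith
    then show False
    proof cases
      case 1
      then have "length P - 1 < length Q - 1" using leg_length[OF P] by linarith
      then show False
        using nth_eq[of "length P - 1"] leg_last_nth[OF P] leg_nth_not_centre[OF Q] leg_length[OF P] 1
        by fastforce
    next
      case 2
      then have "length Q - 1 < length P - 1" using leg_length[OF Q] by linarith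
      then show False
        using nth_eq[of "length Q - 1"] leg_last_nth[OF Q] leg_nth_not_centre[OF P] leg_length[OF Q] 2
        by fastforce
    qed
  qed
  then show ?thesis using nth_eq by (simp add: nth_equalityI)
qed

lemma legs_meet_at_centre:
  assumes P: "leg P" and Q: "leg Q" and hd: "hd P \<noteq> hd Q"
    and v: "v \<in> set P" "v \<in> set Q"
  shows "v = m"
proof -
  have walkQ: "walk V E Q" using Q by (simp add: leg_def gpath_def)
  have off_P: "Q ! i \<notin> set P" if "i < length Q - 1" for i
    using that
  proof (induction i)
    case 0
    show ?case
    proof
      assume "Q ! 0 \<in> set P"
      then obtain j where j: "j < length P" "P ! j = Q ! 0" by (metis in_set_conv_nth)
      have "pendant V E (P ! j)" using Q j leg_length[OF Q] by (simp add: leg_def hd_conv_nth0)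
      then have "j = 0" using leg_pendant_nth[OF P j(1)] by simp
      then show False using hd j leg_length[OF P] leg_length[OF Q] by (simp add: hd_conv_nth0)
    qed
  next
    case (Suc k)
    show ?case
    proof
      assume "Q ! Suc k \<in> set P"
      then obtain j where j: "j < length P" "P ! j = Q ! Suc k" by (metis in_set_conv_nth)
      have "j \<noteq> length P - 1" using j leg_last_nth[OF P] leg_nth_not_centre[OF Q Suc.prems] by auto
      then have j': "j < length P - 1" using j by simp
      have "E (Q ! Suc k) (Q ! k)"
        using walk_edge[OF walkQ, of k] Suc.prems simple_graph_sym[OF simple] by simp
      then have "Q ! k \<in> neighbours V E (P ! j)" using j simple by (simp add: mem_neighbours_iff)
      then have "Q ! k \<in> set P" using leg_neighbours_subset[OF P j'] by auto
      then show False using Suc by simp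
    qed
  qed
  obtain i where i: "i < length Q" "Q ! i = v" using v(2) by (metis in_set_conv_nth)
  show ?thesis
  proof (cases "i < length Q - 1")
    case True
    then show ?thesis using off_P i v(1) by auto
  next
    case False
    then have "i = length Q - 1" using i by simp
    then show ?thesis using i leg_last_nth[OF Q] by simp
  qed
qed

lemma leg_exists:
  assumes "gconnected V E" "pendant V E u" "m \<in> V"
  shows "\<exists>P. leg P \<and> hd P = u"
  using connected_shortest_path[OF assms(1), of u m] assms(2,3)
  by (auto simp: leg_def gpath_def pendant_def)

lemma leg_shortest:
  assumes P: "leg P"
  shows "length P = Suc (gdist V E (hd P) m)"
proof -
  have walk: "walk V E P" using P by (simp add: leg_def gpath_def)
  obtain Q where Q: "walk V E Q" "hd Q = hd P" "last Q = m"
    "length Q = Suc (gdist V E (hd P) m)"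
    using shortest_walk_exists[OF walk] P by (auto simp: leg_def)
  then have "leg Q" using P shortest_walk_distinct[OF Q(1)] by (simp add: leg_def gpath_def)
  then have "Q = P" using leg_unique P Q(2) by blast
  then show ?thesis using Q(4) by simp
qed

lemma leg_gdist_nth: "leg P \<Longrightarrow> j < length P \<Longrightarrow> gdist V E (P ! j) (hd P) = j"
  using gdist_shortest_walk_nth[of E V P j] leg_shortest[of P] simple_graph_sym[OF simple]
  by (auto simp: leg_def gpath_def)

end

section \<open>Laplacian eigenvectors supported on legs\<close>

lemma laplacian_eq:
  "laplacian V E x v = real (card (neighbours V E v)) * x v - (\<Sum>w\<in>neighbours V E v. x w)"
  by (simp add: laplacian_def degree_eq_card_neighbours neighbours_def)

lemma laplacian_lincomb:
  "laplacian V E (\<lambda>v. a * f v + b * h v) v = a * laplacian V E f v + b * laplacian V E h v"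
  by (simp add: laplacian_def sum.distrib sum_distrib_left algebra_simps)

definition wave :: "nat \<Rightarrow> real" where
  "wave j = [1, 0, -1, -1, 0, 1] ! (j mod 6)"

lemma wave_periodic: "wave (6 * q + r) = wave r"
  by (simp add: wave_def)

lemma wave_rec: "wave j + wave (Suc (Suc j)) = wave (Suc j)"
proof -
  have "wave r + wave (Suc (Suc r)) = wave (Suc r)" if "r < 6" for r
  proof -
    have "r = 0 \<or> r = 1 \<or> r = 2 \<or> r = 3 \<or> r = 4 \<or> r = 5" using that by linarith
    then show ?thesis by (elim disjE) (simp_all add: wave_def)
  qed
  moreover have "j = 6 * (j div 6) + j mod 6" by simp
  ultimately show ?thesis
    using wave_periodic[of "j div 6"] by (metis add_Suc_right mod_less_divisor zero_less_numeral)
qed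

lemma wave_zero: "j mod 3 = 1 \<Longrightarrow> wave j = 0"
proof -
  assume "j mod 3 = 1"
  then have "j mod 6 = 1 \<or> j mod 6 = 4" by presburger
  then show ?thesis by (auto simp: wave_def)
qed

lemma wave_nonzero: "j mod 3 = 0 \<Longrightarrow> wave j \<noteq> 0"
proof -
  assume "j mod 3 = 0"
  then have "j mod 6 = 0 \<or> j mod 6 = 3" by presburger
  then show ?thesis by (auto simp: wave_def)
qed

lemma wave_pred_nonzero: "j mod 3 = 1 \<Longrightarrow> wave (j - 1) \<noteq> 0"
  by (rule wave_nonzero) presburger

definition index_of :: "'a list \<Rightarrow> 'a \<Rightarrow> nat" where
  "index_of p v = (THE i. i < length p \<and> p ! i = v)"

lemma index_of_nth: "distinct p \<Longrightarrow> i < length p \<Longrightarrow> index_of p (p ! i) = i"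
  unfolding index_of_def by (rule the_equality) (auto simp: nth_eq_iff_index_eq)

context spider
begin

definition leg_vector :: "'a list \<Rightarrow> 'a \<Rightarrow> real" where
  "leg_vector P v = (if v \<in> set P then wave (index_of P v) else 0)"

lemma leg_vector_nth: "leg P \<Longrightarrow> i < length P \<Longrightarrow> leg_vector P (P ! i) = wave i"
  by (simp add: leg_vector_def leg_def gpath_def index_of_nth)

lemma leg_vector_centre:
  assumes "leg P" "(length P - 1) mod 3 = 1"
  shows "leg_vector P m = 0"
  using leg_vector_nth[OF assms(1), of "length P - 1"] leg_last_nth[OF assms(1)]
    leg_length[OF assms(1)] wave_zero[OF assms(2)] by simp

lemma laplacian_leg_vector_on_leg:
  assumes P: "leg P" and j: "j < length P - 1"
  shows "laplacian V E (leg_vector P) (P ! j) = leg_vector P (P ! j)"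
proof (cases "j = 0")
  case True
  then show ?thesis
    using leg_neighbours_hd[OF P] leg_vector_nth[OF P] leg_length[OF P] wave_zero[of 1]
    by (simp add: laplacian_eq)
next
  case False
  have dist: "distinct P" using P by (simp add: leg_def gpath_def)
  have nbrs: "neighbours V E (P ! j) = {P ! (j - 1), P ! Suc j}"
    using gpath_interior_neighbours_eq[of P j] P j False leg_nth_not_centre[OF P j]
    by (simp add: leg_def)
  have "P ! (j - 1) \<noteq> P ! Suc j" using dist j by (simp add: nth_eq_iff_index_eq)
  then have "laplacian V E (leg_vector P) (P ! j) = 2 * wave j - (wave (j - 1) + wave (Suc j))"
    using j leg_vector_nth[OF P] by (simp add: laplacian_eq nbrs)
  also have "\<dots> = wave j" using wave_rec[of "j - 1"] False by (simp add: Suc_diff_1)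
  finally show ?thesis using j leg_vector_nth[OF P] by simp
qed

lemma laplacian_leg_vector_off_leg:
  assumes P: "leg P" and L: "(length P - 1) mod 3 = 1" and v: "v \<notin> set P"
  shows "laplacian V E (leg_vector P) v = leg_vector P v"
proof -
  have "leg_vector P w = 0" if w: "w \<in> neighbours V E v" for w
  proof (cases "w \<in> set P")
    case True
    then obtain i where i: "i < length P" "P ! i = w" by (metis in_set_conv_nth)
    have "v \<in> neighbours V E w" using w neighbours_sym[OF simple] by blast
    then have "\<not> i < length P - 1" using leg_neighbours_subset[OF P] i v by blast
    then have "i = length P - 1" using i by simp
    then have "w = m" using i leg_last_nth[OF P] by simp
    then show ?thesis using leg_vector_centre[OF P L] by simp
  qed (simp add: leg_vector_def)
  then show ?thesis using v by (simp add: laplacian_eq leg_vector_def)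
qed

lemma laplacian_leg_vector:
  assumes P: "leg P" and L: "(length P - 1) mod 3 = 1" and v: "v \<noteq> m"
  shows "laplacian V E (leg_vector P) v = leg_vector P v"
proof (cases "v \<in> set P")
  case True
  then obtain j where j: "j < length P" "P ! j = v" by (metis in_set_conv_nth)
  then have "j < length P - 1" using v leg_last_nth[OF P] by (cases "j = length P - 1") auto
  then show ?thesis using laplacian_leg_vector_on_leg[OF P] j(2) by blast
qed (use laplacian_leg_vector_off_leg[OF P L] in simp)

lemma laplacian_leg_vector_centre:
  assumes P: "leg P" and L: "(length P - 1) mod 3 = 1"
  shows "laplacian V E (leg_vector P) m = - wave (length P - 2)"
proof -
  let ?a = "P ! (length P - 2)"
  have "Suc (length P - 2) = length P - 1" using leg_length[OF P] by simp
  then have "E ?a m"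
    using walk_edge[of V E P "length P - 2"] P leg_length[OF P] leg_last_nth[OF P]
    by (simp add: leg_def gpath_def)
  then have a: "?a \<in> neighbours V E m" using simple by (simp add: mem_neighbours_iff simple_graph_sym)
  have "leg_vector P w = 0" if w: "w \<in> neighbours V E m - {?a}" for w
  proof -
    have "E w m" using w neighbours_sym[OF simple] mem_neighbours_iff[OF simple] by blast
    then have "w \<notin> set P" using w leg_centre_neighbour[OF P] by blast
    then show ?thesis by (simp add: leg_vector_def)
  qed
  then have "(\<Sum>w\<in>neighbours V E m - {?a}. leg_vector P w) = 0" by simp
  then have "(\<Sum>w\<in>neighbours V E m. leg_vector P w) = leg_vector P ?a"
    using sum.remove[OF finite_neighbours[OF simple] a, of "leg_vector P"] by simp
  then show ?thesis
    using leg_vector_centre[OF P L] leg_vector_nth[OF P] leg_length[OF P]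
    by (simp add: laplacian_eq)
qed

lemma leg_vector_vanishes:
  assumes P: "leg P" and L: "(length P - 1) mod 3 = 1" and Q: "leg Q"
    and v: "v \<in> set Q" and dist: "gdist V E v (hd Q) mod 3 = 1"
  shows "leg_vector P v = 0"
proof (cases "hd P = hd Q")
  case True
  then have "P = Q" using leg_unique[OF P Q] by simp
  then obtain i where i: "i < length P" "P ! i = v" using v by (metis in_set_conv_nth)
  then have "i mod 3 = 1" using dist leg_gdist_nth[OF P i(1)] \<open>P = Q\<close> by simp
  then show ?thesis using leg_vector_nth[OF P i(1)] i(2) wave_zero by simp
next
  case False
  then show ?thesis
    using legs_meet_at_centre[OF P Q False _ v] leg_vector_centre[OF P L]
    by (auto simp: leg_vector_def)
qed


lemma leg_vector_hd:
  assumes "leg P"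
  shows "leg_vector P (hd P) = 1"
proof -
  have "P \<noteq> []" using leg_length[OF assms] by auto
  then show ?thesis using leg_vector_nth[OF assms, of 0] by (simp add: hd_conv_nth wave_def)
qed

lemma leg_vector_other_hd:
  assumes P: "leg P" and Q: "leg Q" and hd: "hd P \<noteq> hd Q"
  shows "leg_vector P (hd Q) = 0"
proof -
  have "Q \<noteq> []" using leg_length[OF Q] by auto
  then have "hd Q \<in> set Q" by simp
  moreover have "hd Q \<noteq> m" using Q centre_not_pendant by (auto simp: leg_def)
  ultimately have "hd Q \<notin> set P" using legs_meet_at_centre[OF P Q hd] by blast
  then show ?thesis by (simp add: leg_vector_def)
qed

definition two_leg_vector :: "'a list \<Rightarrow> 'a list \<Rightarrow> 'a \<Rightarrow> real" where
  "two_leg_vector P Q =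
    (\<lambda>v. wave (length Q - 2) * leg_vector P v - wave (length P - 2) * leg_vector Q v)"

lemma laplacian_two_leg_vector:
  assumes P: "leg P" "(length P - 1) mod 3 = 1" and Q: "leg Q" "(length Q - 1) mod 3 = 1"
  shows "laplacian V E (two_leg_vector P Q) v = two_leg_vector P Q v"
  using laplacian_lincomb[of V E "wave (length Q - 2)" "leg_vector P" "- wave (length P - 2)"]
    laplacian_leg_vector[OF P] laplacian_leg_vector[OF Q]
    laplacian_leg_vector_centre[OF P] laplacian_leg_vector_centre[OF Q]
    leg_vector_centre[OF P] leg_vector_centre[OF Q]
  by (cases "v = m") (simp_all add: two_leg_vector_def)

lemma two_leg_vector_eigenvector:
  assumes P: "leg P" "(length P - 1) mod 3 = 1" and Q: "leg Q" "(length Q - 1) mod 3 = 1"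
    and hd: "hd P \<noteq> hd Q"
  shows "lap_eigenvector V E 1 (two_leg_vector P Q)"
proof -
  have "wave (length Q - 2) \<noteq> 0" using wave_pred_nonzero[OF Q(2)] by (simp add: numeral_2_eq_2)
  then have "two_leg_vector P Q (hd P) \<noteq> 0"
    using leg_vector_hd[OF P(1)] leg_vector_other_hd[OF Q(1) P(1)] hd by (simp add: two_leg_vector_def)
  moreover have "hd P \<in> V" using P(1) by (simp add: leg_def pendant_def)
  ultimately show ?thesis
    using laplacian_two_leg_vector[OF P Q] by (auto simp: lap_eigenvector_def)
qed

lemma path_verts_leg:
  assumes "pendant V E u" "v \<in> path_verts V E u m"
  shows "\<exists>Q. leg Q \<and> hd Q = u \<and> v \<in> set Q"
  using assms by (auto simp: path_verts_def leg_def)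

lemma two_leg_vector_vanishes:
  assumes P: "leg P" "(length P - 1) mod 3 = 1" and Q: "leg Q" "(length Q - 1) mod 3 = 1"
    and u: "pendant V E u" and v: "v \<in> path_verts V E u m" and d: "gdist V E v u mod 3 = 1"
  shows "two_leg_vector P Q v = 0"
proof -
  obtain R where "leg R" "hd R = u" "v \<in> set R" using path_verts_leg[OF u v] by blast
  then show ?thesis
    using leg_vector_vanishes[OF P] leg_vector_vanishes[OF Q] d by (simp add: two_leg_vector_def)
qed

end

lemma tree_spider:
  assumes "tree V E" "card {v. pendant V E v} = 3" "major V E m"
  shows "spider V E m"
  using tree_simple_graph[OF assms(1)] tree_three_pendants_degree_le_2[OF assms] assms(3)
  by unfold_locales (auto simp: major_def pendant_def)

theorem mainTheorem5:
  fixes V :: "'a set" and E :: "'a \<Rightarrow> 'a \<Rightarrow> bool" and u :: "nat \<Rightarrow> 'a" and m :: 'a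
  assumes "tree V E"
    and "distinct [u 1, u 2, u 3]"
    and "{v. pendant V E v} = {u 1, u 2, u 3}"
    and "major V E m"
    and "gdist V E (u 1) m mod 3 = 1"
    and "gdist V E (u 2) m mod 3 = 1"
  shows "\<exists>x. lap_eigenvector V E 1 x \<and>
           (\<forall>k\<in>{1,2,3}. \<forall>v\<in>path_verts V E (u k) m.
               gdist V E v (u k) mod 3 = 1 \<longrightarrow> x v = 0)"
proof -
  have pendant: "pendant V E (u k)" if "k \<in> {1, 2, 3}" for k using assms(3) that by auto
  have "card {v. pendant V E v} = 3" using assms(2,3) by simp
  then interpret spider V E m by (rule tree_spider[OF assms(1) _ assms(4)])
  have "m \<in> V" using assms(4) by (simp add: major_def)
  then obtain P1 P2 where P1: "leg P1" "hd P1 = u 1" and P2: "leg P2" "hd P2 = u 2"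
    using leg_exists[OF tree_connected[OF assms(1)] pendant] by (metis insertCI)
  have L1: "(length P1 - 1) mod 3 = 1" and L2: "(length P2 - 1) mod 3 = 1"
    using leg_shortest[OF P1(1)] leg_shortest[OF P2(1)] P1(2) P2(2) assms(5,6) by simp_all
  have "lap_eigenvector V E 1 (two_leg_vector P1 P2)"
    using two_leg_vector_eigenvector[OF P1(1) L1 P2(1) L2] P1(2) P2(2) assms(2) by simp
  moreover have "two_leg_vector P1 P2 v = 0"
    if "k \<in> {1, 2, 3}" "v \<in> path_verts V E (u k) m" "gdist V E v (u k) mod 3 = 1" for k v
    using two_leg_vector_vanishes[OF P1(1) L1 P2(1) L2 pendant] that by blast
  ultimately show ?thesis by blast
qed

end
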